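(* Let $V$ be a finite nonempty set of voters and $A$ a finite set of alternatives. (i) If a consular election rule $F:\mathcal{P}(V,A)\to S_2(A)$ satisfies SPP and SPO, then its range graph $\mathcal{G}(F)$ satisfies edge-connectivity. (ii) Conversely, if $G$ is a graph on vertex set $A$ with at least one edge that satisfies edge-connectivity, then there exists a consular election rule $F:\mathcal{P}(V,A)\to S_2(A)$ satisfying SPP and SPO with $\mathcal{G}(F)=G$.
   Context: A profile assigns to each voter $i\in V$ a linear order $P_i$ on $A$; $P_i'P_{-i}$ replaces voter $i$'s order by $P_i'$. $S_2(A)$ is the set of 2-element subsets of $A$; a consular election rule is a map $F:\mathcal{P}(V,A)\to S_2(A)$. SPO: for all $P$, $i$, $P_i'$, $\mathrm{best}(P_i,F(P))\succeq_i\mathrm{best}(P_i,F(P_i'P_{-i}))$; SPP: same with $\mathrm{worst}$, where $\mathrm{best}(P_i,W)$, $\mathrm{worst}(P_i,W)$ are the $P_i$-best and $P_i$-worst elements of $W$. The range graph $\mathcal{G}(F)$ has vertex set $A$ and edge set equal to the range of $F$. A graph satisfies edge-connectivity if whenever $\{a,b\}$ and $\{c,d\}$ are edges with $a,b,c,d$ pairwise distinct, then $\{a,c\}$ or $\{a,d\}$ is an edge, and $\{b,c\}$ or $\{b,d\}$ is an edge. *)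

theory Defs
  imports Main
begin

text \<open>A linear order on A is a relation r with (x,y) in r meaning "x is weakly preferred to y".
  A profile on voters V assigns to each voter in V a linear order on A (and the empty
  relation outside V, so that profiles are determined by their values on V).\<close>

definition profiles :: "'v set \<Rightarrow> 'a set \<Rightarrow> ('v \<Rightarrow> 'a rel) set" where
  "profiles V A = {P. (\<forall>i\<in>V. linear_order_on A (P i)) \<and> (\<forall>i. i \<notin> V \<longrightarrow> P i = {})}"

definition S2 :: "'a set \<Rightarrow> 'a set set" where
  "S2 A = {W. W \<subseteq> A \<and> card W = 2}"

definition consular_rule :: "'v set \<Rightarrow> 'a set \<Rightarrow> (('v \<Rightarrow> 'a rel) \<Rightarrow> 'a set) \<Rightarrow> bool" where
  "consular_rule V A F \<longleftrightarrow> (\<forall>P\<in>profiles V A. F P \<in> S2 A)"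

definition best :: "'a rel \<Rightarrow> 'a set \<Rightarrow> 'a" where
  "best r W = (THE x. x \<in> W \<and> (\<forall>y\<in>W. (x, y) \<in> r))"

definition worst :: "'a rel \<Rightarrow> 'a set \<Rightarrow> 'a" where
  "worst r W = (THE x. x \<in> W \<and> (\<forall>y\<in>W. (y, x) \<in> r))"

definition SPO :: "'v set \<Rightarrow> 'a set \<Rightarrow> (('v \<Rightarrow> 'a rel) \<Rightarrow> 'a set) \<Rightarrow> bool" where
  "SPO V A F \<longleftrightarrow> (\<forall>P\<in>profiles V A. \<forall>i\<in>V. \<forall>r'. linear_order_on A r' \<longrightarrow>
     (best (P i) (F P), best (P i) (F (P(i := r')))) \<in> P i)"

definition SPP :: "'v set \<Rightarrow> 'a set \<Rightarrow> (('v \<Rightarrow> 'a rel) \<Rightarrow> 'a set) \<Rightarrow> bool" where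
  "SPP V A F \<longleftrightarrow> (\<forall>P\<in>profiles V A. \<forall>i\<in>V. \<forall>r'. linear_order_on A r' \<longrightarrow>
     (worst (P i) (F P), worst (P i) (F (P(i := r')))) \<in> P i)"

definition range_graph :: "'v set \<Rightarrow> 'a set \<Rightarrow> (('v \<Rightarrow> 'a rel) \<Rightarrow> 'a set) \<Rightarrow> 'a set set" where
  "range_graph V A F = F ` profiles V A"

definition edge_connectivity :: "'a set set \<Rightarrow> bool" where
  "edge_connectivity E \<longleftrightarrow> (\<forall>a b c d. {a, b} \<in> E \<longrightarrow> {c, d} \<in> E \<longrightarrow> distinct [a, b, c, d] \<longrightarrow>
     ({a, c} \<in> E \<or> {a, d} \<in> E) \<and> ({b, c} \<in> E \<or> {b, d} \<in> E))"

end

theory Submission imports Defs begin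

text \<open>(i) Let \<open>r\<close> rank \<open>x, c, d\<close> first. Switching the voters to \<open>r\<close> one at a time never
  worsens, with respect to \<open>r\<close>, the best or the worst elected alternative (SPO and SPP), so the
  unanimous profile for \<open>r\<close> elects an edge whose best element is at least \<open>x\<close>, the best
  element of the edge \<open>{x, y}\<close>, and whose worst element is at least \<open>d\<close>, the worst element
  of \<open>{c, d}\<close>; this edge is \<open>{x, c}\<close> or \<open>{x, d}\<close>.

  (ii) For every order \<open>r\<close>, edge-connectivity yields an edge whose best element and whose worst
  element are simultaneously the \<open>r\<close>-best possible. A dictator electing such an edge for his own
  order satisfies SPO and SPP, and every edge is elected when its endpoints are ranked first.\<close>

lemma linear_order_on_refl: "linear_order_on A r \<Longrightarrow> x \<in> A \<Longrightarrow> (x, x) \<in> r"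
  by (meson linear_order_on_def partial_order_onD(1) refl_onD)

lemma linear_order_on_trans: "linear_order_on A r \<Longrightarrow> (x, y) \<in> r \<Longrightarrow> (y, z) \<in> r \<Longrightarrow> (x, z) \<in> r"
  by (meson linear_order_on_def partial_order_onD(2) transD)

lemma linear_order_on_antisym: "linear_order_on A r \<Longrightarrow> (x, y) \<in> r \<Longrightarrow> (y, x) \<in> r \<Longrightarrow> x = y"
  by (meson linear_order_on_def partial_order_onD(3) antisymD)

lemma linear_order_on_total:
  "linear_order_on A r \<Longrightarrow> x \<in> A \<Longrightarrow> y \<in> A \<Longrightarrow> (x, y) \<in> r \<or> (y, x) \<in> r"
  by (metis linear_order_on_def linear_order_on_refl total_on_def)

lemma linear_order_on_finite_has_top:
  assumes r: "linear_order_on A r" and "finite A" "M \<subseteq> A" "M \<noteq> {}"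
  obtains m where "m \<in> M" "\<And>y. y \<in> M \<Longrightarrow> (m, y) \<in> r"
proof -
  have "r \<subseteq> A \<times> A"
    using r by (simp add: linear_order_on_def partial_order_onD(4))
  then have "finite r"
    using \<open>finite A\<close> by (metis finite_SigmaI finite_subset)
  then have "wf (r - Id)"
    using r linear_order_on_well_order_on well_order_on_def by blast
  then obtain m where m: "m \<in> M" "\<And>y. (y, m) \<in> r - Id \<Longrightarrow> y \<notin> M"
    using \<open>M \<noteq> {}\<close> by (meson wfE_min')
  have "(m, y) \<in> r" if "y \<in> M" for y
    using m that linear_order_on_total[OF r] \<open>M \<subseteq> A\<close> by blast
  with m show thesis using that by blast
qed

lemma best_worst_doubleton:
  assumes r: "linear_order_on A r" and "x \<in> A" "y \<in> A" "(x, y) \<in> r"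
  shows "best r {x, y} = x" and "worst r {x, y} = y"
proof -
  have "(y, x) \<in> r \<Longrightarrow> y = x"
    using linear_order_on_antisym[OF r] assms(4) by blast
  moreover have "(x, x) \<in> r" "(y, y) \<in> r"
    using linear_order_on_refl[OF r] assms(2,3) by auto
  ultimately show "best r {x, y} = x" "worst r {x, y} = y"
    unfolding best_def worst_def using assms(4) by (auto intro: the_equality)
qed

lemma S2_best_worst:
  assumes r: "linear_order_on A r" and W: "W \<in> S2 A"
  shows "W = {best r W, worst r W}" and "best r W \<noteq> worst r W"
    and "(best r W, worst r W) \<in> r"
proof -
  obtain x y where W_eq: "W = {x, y}" "x \<noteq> y" and "x \<in> A" "y \<in> A"
    using W unfolding S2_def by (auto simp: card_2_iff)
  then consider "(x, y) \<in> r" | "(y, x) \<in> r"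
    using linear_order_on_total[OF r] by blast
  then have "best r W \<in> {x, y} \<and> worst r W \<in> {x, y} \<and> best r W \<noteq> worst r W \<and>
      (best r W, worst r W) \<in> r"
  proof cases
    case 1
    then show ?thesis
      using best_worst_doubleton[OF r \<open>x \<in> A\<close> \<open>y \<in> A\<close>] W_eq by simp
  next
    case 2
    then show ?thesis
      using best_worst_doubleton[OF r \<open>y \<in> A\<close> \<open>x \<in> A\<close>] W_eq by (simp add: insert_commute)
  qed
  then show "W = {best r W, worst r W}" "best r W \<noteq> worst r W" "(best r W, worst r W) \<in> r"
    using W_eq by auto
qed

lemma S2_best_worst_mem:
  "linear_order_on A r \<Longrightarrow> W \<in> S2 A \<Longrightarrow> best r W \<in> A \<and> worst r W \<in> A"
  using S2_best_worst(1)[of A r W] unfolding S2_def by blast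

fun first_index :: "'a list \<Rightarrow> 'a \<Rightarrow> nat" where
  "first_index [] x = 0"
| "first_index (y # ys) x = (if x = y then 0 else Suc (first_index ys x))"

lemma nth_first_index: "x \<in> set L \<Longrightarrow> L ! first_index L x = x"
  by (induction L) auto

lemma first_index_less_length: "x \<in> set L \<Longrightarrow> first_index L x < length L"
  by (induction L) auto

lemma first_index_append:
  "first_index (xs @ ys) x = (if x \<in> set xs then first_index xs x else length xs + first_index ys x)"
  by (induction xs) auto

definition list_order :: "'a list \<Rightarrow> 'a rel" where
  "list_order L = {(x, y). x \<in> set L \<and> y \<in> set L \<and> first_index L x \<le> first_index L y}"

lemma linear_order_on_list_order: "linear_order_on (set L) (list_order L)"
  unfolding linear_order_on_def partial_order_on_def preorder_on_def refl_on_def trans_def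
    antisym_def total_on_def list_order_def
  by (auto dest: nth_first_index) (metis nth_first_index)

lemma list_order_append_prefix:
  "x \<in> set xs \<Longrightarrow> y \<in> set ys \<Longrightarrow> y \<notin> set xs \<Longrightarrow> (x, y) \<in> list_order (xs @ ys)"
  unfolding list_order_def by (auto simp: first_index_append dest: first_index_less_length)

lemma list_order_append_downward_closed:
  "(x, y) \<in> list_order (xs @ ys) \<Longrightarrow> y \<in> set xs \<Longrightarrow> x \<in> set xs"
  unfolding list_order_def
  by (auto simp: first_index_append split: if_splits dest: first_index_less_length)

lemma linear_order_with_prefix:
  assumes "finite A" "set xs \<subseteq> A"
  obtains ys where "set ys = A" "linear_order_on A (list_order (xs @ ys))"
proof -
  obtain ys where "set ys = A"
    using finite_list[OF \<open>finite A\<close>] by blast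
  moreover have "set (xs @ ys) = A"
    using calculation assms(2) by auto
  ultimately show thesis
    using that linear_order_on_list_order by metis
qed

definition unanimous :: "'v set \<Rightarrow> 'a rel \<Rightarrow> 'v \<Rightarrow> 'a rel" where
  "unanimous V r = (\<lambda>i. if i \<in> V then r else {})"

lemma unanimous_in_profiles: "linear_order_on A r \<Longrightarrow> unanimous V r \<in> profiles V A"
  unfolding unanimous_def profiles_def by auto

lemma profiles_linear_order: "P \<in> profiles V A \<Longrightarrow> i \<in> V \<Longrightarrow> linear_order_on A (P i)"
  unfolding profiles_def by auto

lemma SPO_SPP_replace_voters:
  assumes F: "consular_rule V A F" "SPO V A F" "SPP V A F"
    and S: "finite S" "S \<subseteq> V" and Q: "Q \<in> profiles V A" and r: "linear_order_on A r"
  shows "(best r (F (\<lambda>i. if i \<in> S then r else Q i)), best r (F Q)) \<in> r \<and>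
         (worst r (F (\<lambda>i. if i \<in> S then r else Q i)), worst r (F Q)) \<in> r"
  using S
proof (induction S rule: finite_induct)
  case empty
  have "F Q \<in> S2 A"
    using F(1) Q unfolding consular_rule_def by blast
  then show ?case
    using S2_best_worst_mem[OF r] linear_order_on_refl[OF r] by simp
next
  case (insert i S)
  define P where "P = (\<lambda>j. if j \<in> insert i S then r else Q j)"
  have P: "P \<in> profiles V A"
    using Q insert.prems r unfolding P_def profiles_def by auto
  have "i \<in> V" "P i = r"
    using insert.prems unfolding P_def by auto
  moreover have "P(i := Q i) = (\<lambda>j. if j \<in> S then r else Q j)"
    using insert.hyps(2) unfolding P_def by (auto simp: fun_eq_iff)
  ultimately have "(best r (F P), best r (F (\<lambda>j. if j \<in> S then r else Q j))) \<in> r \<and>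
      (worst r (F P), worst r (F (\<lambda>j. if j \<in> S then r else Q j))) \<in> r"
    using F(2,3) P profiles_linear_order[OF Q] unfolding SPO_def SPP_def by metis
  with insert.IH insert.prems show ?case
    unfolding P_def using linear_order_on_trans[OF r] by blast
qed

lemma SPO_SPP_unanimous_dominates:
  assumes F: "consular_rule V A F" "SPO V A F" "SPP V A F"
    and "finite V" and Q: "Q \<in> profiles V A" and r: "linear_order_on A r"
  shows "(best r (F (unanimous V r)), best r (F Q)) \<in> r \<and>
         (worst r (F (unanimous V r)), worst r (F Q)) \<in> r"
proof -
  have "(\<lambda>i. if i \<in> V then r else Q i) = unanimous V r"
    using Q unfolding unanimous_def profiles_def by (auto simp: fun_eq_iff)
  then show ?thesis
    using SPO_SPP_replace_voters[OF F \<open>finite V\<close> order_refl Q r] by simp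
qed

lemma SPO_SPP_range_graph_adjacent:
  assumes F: "consular_rule V A F" "SPO V A F" "SPP V A F" and "finite V" "finite A"
    and xy: "{x, y} \<in> range_graph V A F" and cd: "{c, d} \<in> range_graph V A F"
    and "x \<noteq> y" "x \<noteq> c" "x \<noteq> d" "c \<noteq> d"
  shows "{x, c} \<in> range_graph V A F \<or> {x, d} \<in> range_graph V A F"
proof -
  obtain Q1 Q2 where Q: "Q1 \<in> profiles V A" "F Q1 = {x, y}" "Q2 \<in> profiles V A" "F Q2 = {c, d}"
    using xy cd unfolding range_graph_def by force
  then have "{x, y} \<in> S2 A" "{c, d} \<in> S2 A"
    using F(1) unfolding consular_rule_def by metis+
  then have "x \<in> A" "y \<in> A" "c \<in> A" "d \<in> A"
    unfolding S2_def by auto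
  then obtain ys where ys: "set ys = A" and lin: "linear_order_on A (list_order ([x, c, d] @ ys))"
    using linear_order_with_prefix[OF \<open>finite A\<close>, of "[x, c, d]"] by auto
  define r where "r = list_order ([x, c, d] @ ys)"
  have r: "linear_order_on A r"
    using lin unfolding r_def .
  have "(x, y) \<in> r"
    using list_order_append_prefix[of x "[x]" y "[c, d] @ ys"] ys \<open>y \<in> A\<close> \<open>x \<noteq> y\<close>
    unfolding r_def by simp
  then have "best r (F Q1) = x"
    using best_worst_doubleton(1)[OF r \<open>x \<in> A\<close> \<open>y \<in> A\<close>] Q(2) by simp
  have "(c, d) \<in> r"
    using list_order_append_prefix[of c "[x, c]" d "d # ys"] \<open>x \<noteq> d\<close> \<open>c \<noteq> d\<close>
    unfolding r_def by simp
  then have "worst r (F Q2) = d"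
    using best_worst_doubleton(2)[OF r \<open>c \<in> A\<close> \<open>d \<in> A\<close>] Q(4) by simp
  define U where "U = unanimous V r"
  have U: "U \<in> profiles V A" "F U \<in> S2 A"
    using unanimous_in_profiles[OF r] F(1) unfolding U_def consular_rule_def by auto
  have "(best r (F U), x) \<in> r" "(worst r (F U), d) \<in> r"
    using SPO_SPP_unanimous_dominates[OF F \<open>finite V\<close> _ r] Q \<open>best r (F Q1) = x\<close>
      \<open>worst r (F Q2) = d\<close> unfolding U_def by metis+
  then have "best r (F U) = x" "worst r (F U) \<in> {x, c, d}"
    using list_order_append_downward_closed[of "best r (F U)" x "[x]" "[c, d] @ ys"]
      list_order_append_downward_closed[of "worst r (F U)" d "[x, c, d]" ys]
    unfolding r_def by auto
  moreover have "F U = {best r (F U), worst r (F U)}" "best r (F U) \<noteq> worst r (F U)"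
    using S2_best_worst[OF r U(2)] by auto
  ultimately have "F U = {x, c} \<or> F U = {x, d}"
    by auto
  then show ?thesis
    using U(1) unfolding range_graph_def by force
qed

lemma SPO_SPP_edge_connectivity:
  assumes F: "consular_rule V A F" "SPO V A F" "SPP V A F" and "finite V" "finite A"
  shows "edge_connectivity (range_graph V A F)"
  unfolding edge_connectivity_def
proof (intro allI impI)
  fix a b c d
  assume ab: "{a, b} \<in> range_graph V A F" and cd: "{c, d} \<in> range_graph V A F"
    and "distinct [a, b, c, d]"
  have ba: "{b, a} \<in> range_graph V A F"
    using ab by (simp add: insert_commute)
  have "a \<noteq> b" "a \<noteq> c" "a \<noteq> d" "b \<noteq> c" "b \<noteq> d" "c \<noteq> d"
    using \<open>distinct [a, b, c, d]\<close> by auto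
  then show "({a, c} \<in> range_graph V A F \<or> {a, d} \<in> range_graph V A F) \<and>
      ({b, c} \<in> range_graph V A F \<or> {b, d} \<in> range_graph V A F)"
    using SPO_SPP_range_graph_adjacent[OF F \<open>finite V\<close> \<open>finite A\<close> ab cd]
      SPO_SPP_range_graph_adjacent[OF F \<open>finite V\<close> \<open>finite A\<close> ba cd] by blast
qed

definition optimal_edge :: "'a rel \<Rightarrow> 'a set set \<Rightarrow> 'a set \<Rightarrow> bool" where
  "optimal_edge r E e \<longleftrightarrow>
     e \<in> E \<and> (\<forall>e'\<in>E. (best r e, best r e') \<in> r \<and> (worst r e, worst r e') \<in> r)"

lemma edge_connectivity_top_best_top_worst:
  assumes r: "linear_order_on A r" and E: "E \<subseteq> S2 A" and ec: "edge_connectivity E"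
    and "e1 \<in> E" "e2 \<in> E"
    and top_best: "\<And>e. e \<in> E \<Longrightarrow> (best r e1, best r e) \<in> r"
    and top_worst: "\<And>e. e \<in> E \<Longrightarrow> (worst r e2, worst r e) \<in> r"
  shows "{best r e1, worst r e2} \<in> E"
proof -
  define x w y z where "x = best r e1" "w = worst r e1" "y = best r e2" "z = worst r e2"
  have "e1 \<in> S2 A" "e2 \<in> S2 A"
    using \<open>e1 \<in> E\<close> \<open>e2 \<in> E\<close> E by auto
  then have e1: "e1 = {x, w}" "x \<noteq> w" "x \<in> A"
    and e2: "e2 = {y, z}" "y \<noteq> z" "(y, z) \<in> r" "y \<in> A"
    using S2_best_worst[OF r] S2_best_worst_mem[OF r] unfolding x_w_y_z_def by simp_all
  have "(x, y) \<in> r" "(z, w) \<in> r"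
    using top_best[OF \<open>e2 \<in> E\<close>] top_worst[OF \<open>e1 \<in> E\<close>] unfolding x_w_y_z_def .
  then have "w \<noteq> y" "x \<noteq> z"
    using e2(2,3) linear_order_on_antisym[OF r] by auto
  then consider "x = y" | "w = z" | "distinct [x, w, y, z]"
    using e1(2) e2(2) by auto
  then have "{x, z} \<in> E"
  proof cases
    case 3
    then have "{x, y} \<in> E \<or> {x, z} \<in> E"
      using ec \<open>e1 \<in> E\<close> \<open>e2 \<in> E\<close> e1(1) e2(1) unfolding edge_connectivity_def by blast
    moreover have "{x, y} \<notin> E"
    proof
      assume "{x, y} \<in> E"
      moreover have "worst r {x, y} = y"
        using best_worst_doubleton(2)[OF r e1(3) e2(4) \<open>(x, y) \<in> r\<close>] .
      ultimately have "(z, y) \<in> r"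
        using top_worst unfolding x_w_y_z_def by metis
      then show False
        using linear_order_on_antisym[OF r] e2(2,3) by blast
    qed
    ultimately show ?thesis
      by blast
  qed (use \<open>e1 \<in> E\<close> \<open>e2 \<in> E\<close> e1(1) e2(1) in simp_all)
  then show ?thesis
    unfolding x_w_y_z_def .
qed

lemma optimal_edge_exists:
  assumes r: "linear_order_on A r" and "finite A" and E: "E \<subseteq> S2 A" "E \<noteq> {}"
    and ec: "edge_connectivity E"
  shows "\<exists>e. optimal_edge r E e"
proof -
  have "best r ` E \<subseteq> A" "worst r ` E \<subseteq> A" "best r ` E \<noteq> {}" "worst r ` E \<noteq> {}"
    using S2_best_worst_mem[OF r] E by auto
  then obtain x z where "x \<in> best r ` E" "z \<in> worst r ` E"
    and top_x: "\<And>y. y \<in> best r ` E \<Longrightarrow> (x, y) \<in> r"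
    and top_z: "\<And>y. y \<in> worst r ` E \<Longrightarrow> (z, y) \<in> r"
    using linear_order_on_finite_has_top[OF r \<open>finite A\<close>] by metis
  then obtain e1 e2 where e12: "e1 \<in> E" "e2 \<in> E" "x = best r e1" "z = worst r e2"
    by blast
  have top_best: "\<And>e. e \<in> E \<Longrightarrow> (x, best r e) \<in> r"
    and top_worst: "\<And>e. e \<in> E \<Longrightarrow> (z, worst r e) \<in> r"
    using top_x top_z by simp_all
  have xz: "{x, z} \<in> E"
    using edge_connectivity_top_best_top_worst[OF r E(1) ec \<open>e1 \<in> E\<close> \<open>e2 \<in> E\<close>]
      top_best top_worst e12 by simp
  have "e2 \<in> S2 A"
    using e12 E(1) by blast
  have "x \<in> A" "z \<in> A"
    using \<open>x \<in> best r ` E\<close> \<open>z \<in> worst r ` E\<close> \<open>best r ` E \<subseteq> A\<close> \<open>worst r ` E \<subseteq> A\<close> by blast+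
  have "(x, best r e2) \<in> r" "(best r e2, z) \<in> r"
    using top_best[OF \<open>e2 \<in> E\<close>] S2_best_worst(3)[OF r \<open>e2 \<in> S2 A\<close>] e12(4) by simp_all
  then have "(x, z) \<in> r"
    by (rule linear_order_on_trans[OF r])
  then have "best r {x, z} = x" "worst r {x, z} = z"
    using best_worst_doubleton[OF r \<open>x \<in> A\<close> \<open>z \<in> A\<close>] by simp_all
  then have "optimal_edge r E {x, z}"
    unfolding optimal_edge_def using xz top_best top_worst by simp
  then show ?thesis ..
qed

lemma optimal_edge_top_two:
  assumes r: "linear_order_on A r" and E: "E \<subseteq> S2 A" and e: "optimal_edge r E e"
    and ab: "{a, b} \<in> E" "(a, b) \<in> r"
    and a_top: "\<And>y. (y, a) \<in> r \<Longrightarrow> y = a" and b_second: "\<And>y. (y, b) \<in> r \<Longrightarrow> y \<in> {a, b}"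
  shows "e = {a, b}"
proof -
  have "a \<in> A" "b \<in> A"
    using ab(1) E unfolding S2_def by auto
  then have "best r {a, b} = a" "worst r {a, b} = b"
    using best_worst_doubleton[OF r _ _ ab(2)] by auto
  then have "best r e = a" "worst r e \<in> {a, b}"
    using e ab(1) a_top b_second unfolding optimal_edge_def by metis+
  moreover have "e = {best r e, worst r e}" "best r e \<noteq> worst r e"
    using S2_best_worst[OF r] e E unfolding optimal_edge_def by blast+
  ultimately show ?thesis
    by auto
qed

lemma dictatorship_SPO_SPP:
  assumes "i0 \<in> V" "E \<subseteq> S2 A"
    and g: "\<And>r. linear_order_on A r \<Longrightarrow> optimal_edge r E (g r)"
  shows "consular_rule V A (\<lambda>P. g (P i0))" and "SPO V A (\<lambda>P. g (P i0))"
    and "SPP V A (\<lambda>P. g (P i0))"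
proof -
  have g_S2: "g (P i0) \<in> S2 A" if "P \<in> profiles V A" for P
    using g[OF profiles_linear_order[OF that \<open>i0 \<in> V\<close>]] \<open>E \<subseteq> S2 A\<close> unfolding optimal_edge_def by blast
  then show "consular_rule V A (\<lambda>P. g (P i0))"
    unfolding consular_rule_def by blast
  have "(best (P i) (g (P i0)), best (P i) (g ((P(i := r')) i0))) \<in> P i \<and>
      (worst (P i) (g (P i0)), worst (P i) (g ((P(i := r')) i0))) \<in> P i"
    if P: "P \<in> profiles V A" and "i \<in> V" and r': "linear_order_on A r'" for P i r'
  proof (cases "i = i0")
    case True
    then show ?thesis
      using g[OF r'] g[OF profiles_linear_order[OF P \<open>i0 \<in> V\<close>]] unfolding optimal_edge_def by simp
  next
    case False
    then show ?thesis
      using S2_best_worst_mem[OF profiles_linear_order[OF P \<open>i \<in> V\<close>] g_S2[OF P]]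
        linear_order_on_refl[OF profiles_linear_order[OF P \<open>i \<in> V\<close>]] by simp
  qed
  then show "SPO V A (\<lambda>P. g (P i0))" "SPP V A (\<lambda>P. g (P i0))"
    unfolding SPO_def SPP_def by blast+
qed

lemma dictatorship_range_graph:
  assumes "i0 \<in> V" "finite A" "E \<subseteq> S2 A"
    and g: "\<And>r. linear_order_on A r \<Longrightarrow> optimal_edge r E (g r)"
  shows "range_graph V A (\<lambda>P. g (P i0)) = E"
proof
  show "range_graph V A (\<lambda>P. g (P i0)) \<subseteq> E"
  proof
    fix e assume "e \<in> range_graph V A (\<lambda>P. g (P i0))"
    then obtain P where "P \<in> profiles V A" "e = g (P i0)"
      unfolding range_graph_def by blast
    then show "e \<in> E"
      using g[OF profiles_linear_order[OF _ \<open>i0 \<in> V\<close>]] unfolding optimal_edge_def by blast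
  qed
next
  show "E \<subseteq> range_graph V A (\<lambda>P. g (P i0))"
  proof
    fix e assume "e \<in> E"
    then obtain a b where e: "e = {a, b}" "a \<noteq> b" "a \<in> A" "b \<in> A"
      using \<open>E \<subseteq> S2 A\<close> unfolding S2_def by (auto simp: card_2_iff)
    then obtain ys where lin: "linear_order_on A (list_order ([a, b] @ ys))"
      using linear_order_with_prefix[OF \<open>finite A\<close>, of "[a, b]"] by auto
    define r where "r = list_order ([a, b] @ ys)"
    have r: "linear_order_on A r"
      using lin unfolding r_def .
    have "(a, b) \<in> r"
      using list_order_append_prefix[of a "[a]" b "b # ys"] e(2) unfolding r_def by simp
    moreover have "y = a" if "(y, a) \<in> r" for y
      using list_order_append_downward_closed[of y a "[a]" "b # ys"] that unfolding r_def by simp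
    moreover have "y \<in> {a, b}" if "(y, b) \<in> r" for y
      using list_order_append_downward_closed[of y b "[a, b]" ys] that unfolding r_def by simp
    ultimately have "g r = e"
      using optimal_edge_top_two[OF r \<open>E \<subseteq> S2 A\<close> g[OF r]] \<open>e \<in> E\<close> unfolding e(1) by blast
    moreover have "unanimous V r \<in> profiles V A" "unanimous V r i0 = r"
      using unanimous_in_profiles[OF r] \<open>i0 \<in> V\<close> unfolding unanimous_def by auto
    ultimately show "e \<in> range_graph V A (\<lambda>P. g (P i0))"
      unfolding range_graph_def by (metis rev_image_eqI)
  qed
qed

lemma edge_connectivity_imp_SPO_SPP_rule:
  assumes "finite A" "V \<noteq> {}" "E \<subseteq> S2 A" "E \<noteq> {}" "edge_connectivity E"
  shows "\<exists>F. consular_rule V A F \<and> SPP V A F \<and> SPO V A F \<and> range_graph V A F = E"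
proof -
  obtain i0 where "i0 \<in> V"
    using \<open>V \<noteq> {}\<close> by blast
  define g where "g r = (SOME e. optimal_edge r E e)" for r
  have "optimal_edge r E (g r)" if "linear_order_on A r" for r
    using optimal_edge_exists[OF that assms(1,3-5)] unfolding g_def by (rule someI_ex)
  then show ?thesis
    using dictatorship_SPO_SPP[OF \<open>i0 \<in> V\<close> \<open>E \<subseteq> S2 A\<close>]
      dictatorship_range_graph[OF \<open>i0 \<in> V\<close> \<open>finite A\<close> \<open>E \<subseteq> S2 A\<close>] by blast
qed

theorem proposition35:
  fixes V :: "'v set" and A :: "'a set"
  assumes "finite V" and "V \<noteq> {}" and "finite A"
  shows "(\<forall>F. consular_rule V A F \<and> SPP V A F \<and> SPO V A F \<longrightarrow>
            edge_connectivity (range_graph V A F))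
       \<and> (\<forall>E. E \<subseteq> S2 A \<and> E \<noteq> {} \<and> edge_connectivity E \<longrightarrow>
            (\<exists>F. consular_rule V A F \<and> SPP V A F \<and> SPO V A F \<and> range_graph V A F = E))"
  using SPO_SPP_edge_connectivity[OF _ _ _ \<open>finite V\<close> \<open>finite A\<close>]
    edge_connectivity_imp_SPO_SPP_rule[OF \<open>finite A\<close> \<open>V \<noteq> {}\<close>] by blast

end
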